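(* Let $N\ge0$ be an integer and $a,b,c,z$ complex numbers (or indeterminates) with $z\ne0$ such that all arguments and denominators below are well defined and nonzero. Then \begin{align*} {}_{2}F_{1}^{[N]}\left(\begin{matrix}a,b\\ c\end{matrix};z\right) &=\frac{(b+Nz^{-1}-N)_{N}}{(Nz^{-1}-N)_{N}}\, {}_{2}F_{1}^{[N]}\left(\begin{matrix}c-a,b\\ c\end{matrix};\frac{N}{N-Nz^{-1}+1-b}\right) \\ &=\frac{(a+b-c+Nz^{-1}-N)_{N}}{(Nz^{-1}-N)_{N}}\, {}_{2}F_{1}^{[N]}\left(\begin{matrix}c-a,c-b\\ c\end{matrix};\frac{N}{Nz^{-1}+a+b-c}\right). \end{align*}
   Context: $(x)_m=x(x+1)\cdots(x+m-1)$ is the rising factorial, $(x)_0=1$. For $N\ge0$, \[ {}_{2}F_{1}^{[N]}\left(\begin{matrix}a,b\\ c\end{matrix};z\right)=\sum_{m=0}^{N}\frac{(a)_m(b)_m}{(c)_m\, m!}\,\frac{(N+1-m)_m}{(Nz^{-1}-m)_m}. \] *)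

theory Defs
  imports Complex_Main
begin

definition F21N :: "nat \<Rightarrow> complex \<Rightarrow> complex \<Rightarrow> complex \<Rightarrow> complex \<Rightarrow> complex" where
  "F21N N a b c z =
     (\<Sum>m=0..N. pochhammer a m * pochhammer b m / (pochhammer c m * of_nat (fact m))
        * pochhammer (of_nat (N + 1 - m)) m / pochhammer (of_nat N / z - of_nat m) m)"

end

theory Submission
  imports Defs "HOL-Computational_Algebra.Formal_Power_Series"
begin

text \<open>Write \<open>x = N/z\<close> and \<open>(N+1-m)_m / m! = C(N,m)\<close>. Multiplying the truncated
  function by \<open>(x-N)_N\<close> turns the denominators \<open>(x-m)_m\<close> into \<open>(x-N)_(N-m)\<close>.
  Expanding \<open>(a)_m / (c)_m\<close> by Chu--Vandermonde and exchanging the two sums, the inner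
  sum over \<open>m\<close> collapses by the binomial theorem for rising factorials; what remains
  is again a truncated function, with \<open>a\<close> replaced by \<open>c-a\<close>: this is the first
  (Pfaff) identity. Applying it twice, using the symmetry in \<open>a, b\<close>, gives the second
  (Euler) identity.\<close>

definition trunc_2F1 :: "nat \<Rightarrow> 'a \<Rightarrow> 'a \<Rightarrow> 'a \<Rightarrow> 'a \<Rightarrow> 'a::field_char_0" where
  "trunc_2F1 N a b c x = (\<Sum>m=0..N. of_nat (N choose m) * pochhammer a m * pochhammer b m
       / (pochhammer c m * pochhammer (x - of_nat m) m))"

lemma pochhammer_of_nat_eq_fact_mult_choose:
  assumes "k \<le> n"
  shows "pochhammer (of_nat (n - k + 1) :: 'a::field_char_0) k = fact k * of_nat (n choose k)"
proof -
  have "of_nat (n choose k) = (of_nat n gchoose k :: 'a)"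
    by (rule binomial_gbinomial)
  also have "\<dots> = pochhammer (of_nat n - of_nat k + 1) k / fact k"
    by (rule gbinomial_pochhammer')
  also have "of_nat n - of_nat k + 1 = (of_nat (n - k + 1) :: 'a)"
    using assms by (simp add: of_nat_diff)
  finally show ?thesis by (simp add: field_simps)
qed

lemma F21N_eq_trunc_2F1: "F21N N a b c z = trunc_2F1 N a b c (of_nat N / z)"
  unfolding F21N_def trunc_2F1_def
proof (rule sum.cong[OF refl])
  fix m assume "m \<in> {0..N}"
  then have "pochhammer (of_nat (N + 1 - m) :: complex) m = fact m * of_nat (N choose m)"
    using pochhammer_of_nat_eq_fact_mult_choose[of m N] by (simp add: Suc_diff_le)
  then show "pochhammer a m * pochhammer b m / (pochhammer c m * of_nat (fact m)) *
          pochhammer (of_nat (N + 1 - m)) m / pochhammer (of_nat N / z - of_nat m) m =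
        of_nat (N choose m) * pochhammer a m * pochhammer b m /
          (pochhammer c m * pochhammer (of_nat N / z - of_nat m) m)"
    by (simp add: field_simps of_nat_fact)
qed

lemma trunc_2F1_commute: "trunc_2F1 N a b c x = trunc_2F1 N b a c x"
  unfolding trunc_2F1_def by (simp add: mult_ac)

lemma pochhammer_minus_of_nat_split:
  fixes x :: "'a::comm_ring_1"
  assumes "m \<le> N"
  shows "pochhammer (x - of_nat N) N = pochhammer (x - of_nat N) (N - m) * pochhammer (x - of_nat m) m"
proof -
  have "pochhammer (x - of_nat N) N = pochhammer (x - of_nat N) ((N - m) + m)"
    using assms by simp
  also have "\<dots> = pochhammer (x - of_nat N) (N - m) * pochhammer (x - of_nat N + of_nat (N - m)) m"
    by (rule pochhammer_product')
  also have "x - of_nat N + of_nat (N - m) = x - of_nat m"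
    using assms by (simp add: of_nat_diff)
  finally show ?thesis .
qed

lemma pochhammer_minus_of_nat_neq_0:
  fixes x :: "'a::comm_ring_1"
  assumes "pochhammer (x - of_nat N) N \<noteq> 0" and "m \<le> N"
  shows "pochhammer (x - of_nat m) m \<noteq> 0"
  using assms pochhammer_minus_of_nat_split[OF \<open>m \<le> N\<close>, of x] by auto

lemma pochhammer_mult_trunc_2F1:
  fixes a b c x :: "'a::field_char_0"
  assumes hx: "pochhammer (x - of_nat N) N \<noteq> 0"
  shows "pochhammer (x - of_nat N) N * trunc_2F1 N a b c x = (\<Sum>m=0..N. of_nat (N choose m)
      * pochhammer b m * pochhammer (x - of_nat N) (N - m) * (pochhammer a m / pochhammer c m))"
  unfolding trunc_2F1_def sum_distrib_left
proof (rule sum.cong[OF refl])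
  fix m assume "m \<in> {0..N}"
  then have m: "m \<le> N" by simp
  show "pochhammer (x - of_nat N) N * (of_nat (N choose m) * pochhammer a m * pochhammer b m
        / (pochhammer c m * pochhammer (x - of_nat m) m))
      = of_nat (N choose m) * pochhammer b m * pochhammer (x - of_nat N) (N - m)
        * (pochhammer a m / pochhammer c m)"
    unfolding pochhammer_minus_of_nat_split[OF m, of x]
    using pochhammer_minus_of_nat_neq_0[OF hx m] by (simp add: field_simps)
qed

lemma Vandermonde_pochhammer_upto:
  fixes a c :: "'a::field_char_0"
  assumes "pochhammer c m \<noteq> 0" and "m \<le> N"
  shows "pochhammer a m / pochhammer c m =
     (\<Sum>j=0..N. pochhammer (c - a) j * pochhammer (- of_nat m) j / (of_nat (fact j) * pochhammer c j))"
proof -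
  have "\<forall>i\<in>{0..<m}. c \<noteq> - of_nat i"
    using assms(1) by (auto simp: pochhammer_eq_0_iff)
  then have "pochhammer (c - (c - a)) m / pochhammer c m =
      (\<Sum>j=0..m. pochhammer (c - a) j * pochhammer (- of_nat m) j / (of_nat (fact j) * pochhammer c j))"
    by (rule Vandermonde_pochhammer[symmetric])
  also have "\<dots> =
      (\<Sum>j=0..N. pochhammer (c - a) j * pochhammer (- of_nat m) j / (of_nat (fact j) * pochhammer c j))"
    by (rule sum.mono_neutral_left) (use assms(2) in \<open>auto simp: pochhammer_of_nat_eq_0_lemma\<close>)
  finally show ?thesis by simp
qed

lemma sum_choose_pochhammer_minus_of_nat:
  fixes b y :: "'a::field_char_0"
  assumes "j \<le> N"
  shows "(\<Sum>m=0..N. of_nat (N choose m) * pochhammer (- of_nat m) j * pochhammer b m * pochhammer y (N - m))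
     = (-1)^j * fact j * of_nat (N choose j) * pochhammer b j * pochhammer (b + of_nat j + y) (N - j)"
    (is "?L = ?R")
proof -
  let ?f = "\<lambda>m. of_nat (N choose m) * pochhammer (- of_nat m) j * pochhammer b m * pochhammer y (N - m) :: 'a"
  let ?C = "(-1)^j * fact j * of_nat (N choose j) * pochhammer b j :: 'a"
  have "?L = sum ?f {0..<j} + sum ?f {j..N}"
  proof -
    have "{0..N} = {0..<j} \<union> {j..N}" using assms by auto
    then show ?thesis by (simp add: sum.union_disjoint ivl_disj_int)
  qed
  also have "sum ?f {0..<j} = 0"
    by (rule sum.neutral) (auto simp: pochhammer_of_nat_eq_0_lemma)
  also have "sum ?f {j..N} = (\<Sum>l=0..N-j. ?f (l + j))"
    using sum.shift_bounds_cl_nat_ivl[of ?f 0 j "N - j"] assms by simp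
  also have "\<dots> = (\<Sum>l=0..N-j. ?C *
        (of_nat (N - j choose l) * pochhammer (b + of_nat j) l * pochhammer y (N - j - l)))"
  proof (rule sum.cong[OF refl])
    fix l assume "l \<in> {0..N-j}"
    then have l: "l + j \<le> N" using assms by simp
    have "pochhammer (- of_nat (l + j)) j = (-1)^j * pochhammer (of_nat (l + j) - of_nat j + 1 :: 'a) j"
      by (rule pochhammer_minus)
    also have "of_nat (l + j) - of_nat j + 1 = (of_nat (l + j - j + 1) :: 'a)"
      by simp
    also have "pochhammer \<dots> j = fact j * of_nat ((l + j) choose j)"
      by (rule pochhammer_of_nat_eq_fact_mult_choose) simp
    finally have neg: "pochhammer (- of_nat (l + j)) j = (-1)^j * (fact j * of_nat ((l + j) choose j) :: 'a)" .
    have split: "pochhammer b (l + j) = pochhammer b j * pochhammer (b + of_nat j) l"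
      using pochhammer_product'[of b j l] by (simp add: add.commute)
    have "(N choose (l + j)) * ((l + j) choose j) = (N choose j) * ((N - j) choose l)"
      using choose_mult[of j "l + j" N] l by simp
    then have choose: "of_nat (N choose (l + j)) * of_nat ((l + j) choose j)
        = (of_nat (N choose j) * of_nat ((N - j) choose l) :: 'a)"
      by (metis of_nat_mult)
    show "?f (l + j) = ?C * (of_nat (N - j choose l) * pochhammer (b + of_nat j) l * pochhammer y (N - j - l))"
      unfolding neg split diff_diff_left[symmetric]
      using choose by (simp add: mult_ac add.commute[of l j])
  qed
  also have "\<dots> = ?C * pochhammer (b + of_nat j + y) (N - j)"
    by (simp add: sum_distrib_left[symmetric] atLeast0AtMost pochhammer_binomial_sum)
  finally show ?thesis by simp
qed

lemma pochhammer_reflect: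
  fixes y :: "'a::comm_ring_1"
  shows "pochhammer (1 - y - of_nat n) n = (-1)^n * pochhammer y n"
  using pochhammer_minus'[of "- y" n] by (simp add: algebra_simps)

lemma trunc_2F1_Pfaff:
  fixes a b c x :: "'a::field_char_0"
  assumes hc: "pochhammer c N \<noteq> 0"
    and hx: "pochhammer (x - of_nat N) N \<noteq> 0"
    and hw: "pochhammer (1 - b - x) N \<noteq> 0"
  shows "trunc_2F1 N a b c x = pochhammer (b + x - of_nat N) N / pochhammer (x - of_nat N) N
           * trunc_2F1 N (c - a) b c (of_nat N - x + 1 - b)"
proof -
  let ?w = "of_nat N - x + 1 - b"
  let ?coeff = "\<lambda>j. pochhammer (c - a) j / (of_nat (fact j) * pochhammer c j)"
  let ?term = "\<lambda>j m. of_nat (N choose m) * pochhammer (- of_nat m) j * pochhammer b m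
                 * pochhammer (x - of_nat N) (N - m)"
  have hcm: "pochhammer c m \<noteq> 0" if "m \<le> N" for m
    using pochhammer_neq_0_mono[OF hc that] .
  have hwm: "pochhammer (?w - of_nat m) m \<noteq> 0" if "m \<le> N" for m
    using pochhammer_minus_of_nat_neq_0[of ?w N m] hw that by simp
  have "pochhammer (x - of_nat N) N * trunc_2F1 N a b c x = (\<Sum>m=0..N. of_nat (N choose m)
      * pochhammer b m * pochhammer (x - of_nat N) (N - m) * (pochhammer a m / pochhammer c m))"
    by (rule pochhammer_mult_trunc_2F1[OF hx])
  also have "\<dots> = (\<Sum>m=0..N. \<Sum>j=0..N. ?coeff j * ?term j m)"
    by (rule sum.cong[OF refl])
      (simp add: Vandermonde_pochhammer_upto[OF hcm] sum_distrib_left mult_ac)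
  also have "\<dots> = (\<Sum>j=0..N. ?coeff j * (\<Sum>m=0..N. ?term j m))"
    by (subst sum.swap) (simp add: sum_distrib_left)
  also have "\<dots> = (\<Sum>j=0..N. ?coeff j * ((-1)^j * fact j * of_nat (N choose j) * pochhammer b j
      * pochhammer (b + of_nat j + (x - of_nat N)) (N - j)))"
    by (rule sum.cong[OF refl]) (simp add: sum_choose_pochhammer_minus_of_nat)
  also have "\<dots> = pochhammer (b + x - of_nat N) N * trunc_2F1 N (c - a) b c ?w"
    unfolding trunc_2F1_def sum_distrib_left
  proof (rule sum.cong[OF refl])
    fix j assume "j \<in> {0..N}"
    then have j: "j \<le> N" by simp
    have "?w - of_nat j = 1 - (b + x - of_nat N) - of_nat j"
      by simp
    then have reflect: "pochhammer (?w - of_nat j) j = (-1)^j * pochhammer (b + x - of_nat N) j"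
      by (simp only: pochhammer_reflect)
    have split: "pochhammer (b + x - of_nat N) N
        = pochhammer (b + x - of_nat N) j * pochhammer (b + of_nat j + (x - of_nat N)) (N - j)"
      using pochhammer_product[OF j, of "b + x - of_nat N"] by (simp add: algebra_simps)
    have sign: "(-1::'a)^j * (-1)^j = 1"
      by (simp flip: power_mult_distrib)
    show "?coeff j * ((-1)^j * fact j * of_nat (N choose j) * pochhammer b j
          * pochhammer (b + of_nat j + (x - of_nat N)) (N - j))
        = pochhammer (b + x - of_nat N) N * (of_nat (N choose j) * pochhammer (c - a) j
          * pochhammer b j / (pochhammer c j * pochhammer (?w - of_nat j) j))"
      using hwm[OF j] hcm[OF j] sign unfolding split reflect by (simp add: field_simps)
  qed
  finally show ?thesis
    using hx by (simp add: field_simps)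
qed

lemma trunc_2F1_Euler:
  fixes a b c x :: "'a::field_char_0"
  assumes hc: "pochhammer c N \<noteq> 0"
    and hx: "pochhammer (x - of_nat N) N \<noteq> 0"
    and hw: "pochhammer (1 - b - x) N \<noteq> 0"
    and hw': "pochhammer (x + a + b - c - of_nat N) N \<noteq> 0"
  shows "trunc_2F1 N a b c x = pochhammer (a + b - c + x - of_nat N) N / pochhammer (x - of_nat N) N
           * trunc_2F1 N (c - a) (c - b) c (x + a + b - c)"
proof -
  define w where "w = of_nat N - x + 1 - b"
  have w_shift: "w - of_nat N = 1 - (b + x - of_nat N) - of_nat N"
    by (simp add: w_def)
  have w_shift': "c - a + w - of_nat N = 1 - (a + b - c + x - of_nat N) - of_nat N"
    by (simp add: w_def)
  have hw_N: "pochhammer (w - of_nat N) N \<noteq> 0"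
    using hw by (simp add: w_def algebra_simps)
  have "trunc_2F1 N a b c x = pochhammer (b + x - of_nat N) N / pochhammer (x - of_nat N) N
      * trunc_2F1 N b (c - a) c w"
    using trunc_2F1_Pfaff[OF hc hx hw] by (simp add: w_def trunc_2F1_commute[of N b])
  also have "trunc_2F1 N b (c - a) c w = pochhammer (c - a + w - of_nat N) N
      / pochhammer (w - of_nat N) N * trunc_2F1 N (c - b) (c - a) c (x + a + b - c)"
  proof -
    have "pochhammer (1 - (c - a) - w) N \<noteq> 0"
      using hw' by (simp add: w_def algebra_simps)
    moreover have "of_nat N - w + 1 - (c - a) = x + a + b - c"
      by (simp add: w_def)
    ultimately show ?thesis
      using trunc_2F1_Pfaff[OF hc hw_N] by metis
  qed
  moreover have "pochhammer (b + x - of_nat N) N \<noteq> 0"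
    using hw_N unfolding w_shift pochhammer_reflect by simp
  ultimately show ?thesis
    unfolding w_shift w_shift' pochhammer_reflect
    by (simp add: trunc_2F1_commute[of N "c - b"])
qed

theorem corollary4p3:
  fixes N :: nat and a b c z :: complex
  assumes hz: "z \<noteq> 0"
    and hc: "\<And>m. m \<le> N \<Longrightarrow> pochhammer c m \<noteq> 0"
    and hd0: "\<And>m. m \<le> N \<Longrightarrow> pochhammer (of_nat N / z - of_nat m) m \<noteq> 0"
    and hN: "pochhammer (of_nat N / z - of_nat N) N \<noteq> 0"
    and hden1: "of_nat N - of_nat N / z + 1 - b \<noteq> 0"
    and hd1: "\<And>m. m \<le> N \<Longrightarrow>
       pochhammer (of_nat N / (of_nat N / (of_nat N - of_nat N / z + 1 - b)) - of_nat m) m \<noteq> 0"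
    and hden2: "of_nat N / z + a + b - c \<noteq> 0"
    and hd2: "\<And>m. m \<le> N \<Longrightarrow>
       pochhammer (of_nat N / (of_nat N / (of_nat N / z + a + b - c)) - of_nat m) m \<noteq> 0"
  shows "F21N N a b c z =
           pochhammer (b + of_nat N / z - of_nat N) N / pochhammer (of_nat N / z - of_nat N) N
           * F21N N (c - a) b c (of_nat N / (of_nat N - of_nat N / z + 1 - b))
         \<and> F21N N a b c z =
           pochhammer (a + b - c + of_nat N / z - of_nat N) N / pochhammer (of_nat N / z - of_nat N) N
           * F21N N (c - a) (c - b) c (of_nat N / (of_nat N / z + a + b - c))"
proof (cases "N = 0")
  case True
  then show ?thesis by (simp add: F21N_def)
next
  case False
  define x where "x = of_nat N / z"
  have N_div_N_div: "of_nat N / (of_nat N / w) = w" if "w \<noteq> 0" for w :: complex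
    using False that by simp
  have hc_N: "pochhammer c N \<noteq> 0"
    using hc by simp
  have hx: "pochhammer (x - of_nat N) N \<noteq> 0"
    using hN by (simp add: x_def)
  have hw: "pochhammer (1 - b - x) N \<noteq> 0"
    using hd1[of N] unfolding N_div_N_div[OF hden1] by (simp add: x_def)
  have hw': "pochhammer (x + a + b - c - of_nat N) N \<noteq> 0"
    using hd2[of N] unfolding N_div_N_div[OF hden2] by (simp add: x_def)
  show ?thesis
    unfolding F21N_eq_trunc_2F1 N_div_N_div[OF hden1] N_div_N_div[OF hden2]
    unfolding x_def[symmetric]
    using trunc_2F1_Pfaff[OF hc_N hx hw] trunc_2F1_Euler[OF hc_N hx hw hw'] ..
qed

end
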